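(* Let $n\in\mathbb{N}$ and $i\in\mathbb{N}$ with $2\le i\le2^n$. Then there exists a maximal lattice-free polyhedron in $\mathbb{R}^n$ with exactly $i$ facets.
   Context: A set $B\subseteq\mathbb{R}^n$ is lattice-free if it is an $n$-dimensional closed convex set with $\operatorname{int}(B)\cap\mathbb{Z}^n=\emptyset$; it is maximal lattice-free if it is not a proper subset of another lattice-free set. *)

theory Defs
  imports "HOL-Analysis.Analysis"
begin

definition integer_points :: "(real ^ 'n) set" where
  "integer_points = {x. \<forall>k. x $ k \<in> \<int>}"

definition lattice_free :: "(real ^ 'n) set \<Rightarrow> bool" where
  "lattice_free B \<longleftrightarrow> convex B \<and> closed B \<and> aff_dim B = int CARD('n) \<and>
     interior B \<inter> integer_points = {}"

definition maximal_lattice_free :: "(real ^ 'n) set \<Rightarrow> bool" where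
  "maximal_lattice_free B \<longleftrightarrow> lattice_free B \<and>
     (\<forall>B'. lattice_free B' \<and> B \<subseteq> B' \<longrightarrow> B' = B)"

end

theory Submission
  imports Defs
begin

text \<open>
  Choose \<open>s\<close> with \<open>2^s < i \<le> 2^(s+1)\<close>, a set \<open>S\<close> of \<open>s\<close> coordinates and one further coordinate \<open>m\<close>.
  For \<open>T \<subseteq> S\<close> the inequality \<open>sum_T x_k - sum_(S-T) x_k \<le> |T|\<close> is tight at the 0/1-point \<open>1_T\<close>
  and strict at \<open>1_T'\<close> for \<open>T' \<noteq> T\<close>, and every integer point satisfies one of these \<open>2^s\<close>
  inequalities with \<open>\<ge>\<close>. Splitting the inequality of each \<open>T\<close> in a family \<open>D\<close> of \<open>i - 2^s\<close> sets
  into two, by adding \<open>x_m\<close> to its positive or to its negative part, yields \<open>i\<close> inequalities with the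
  same properties.

  Such a system, which moreover has a strictly feasible point, defines a maximal lattice-free
  polyhedron with one facet per inequality: the integer point of an inequality \<open>c\<close> shows that no
  inequality is redundant, and a convex set containing the polyhedron and a point \<open>y\<close> violating \<open>c\<close>
  contains in its interior the open segment from \<open>y\<close> through that integer point to a point just
  inside the polyhedron.
\<close>

lemma ex_step_preserving_strict_ineqs:
  fixes a :: "'c \<Rightarrow> 'a::real_inner"
  assumes "finite C" and "\<And>d. d \<in> C \<Longrightarrow> a d \<bullet> z < b d"
  shows "\<exists>s>0. \<forall>d\<in>C. a d \<bullet> (z + s *\<^sub>R v) < b d"
proof -
  have "\<forall>\<^sub>F s in at_right 0. a d \<bullet> (z + s *\<^sub>R v) < b d" if "d \<in> C" for d
  proof (rule order_tendstoD(2))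
    show "((\<lambda>s. a d \<bullet> (z + s *\<^sub>R v)) \<longlongrightarrow> a d \<bullet> z) (at_right 0)"
      by (auto intro!: tendsto_eq_intros)
  qed (use assms(2) that in blast)
  then have "\<forall>\<^sub>F s in at_right 0. s > 0 \<and> (\<forall>d\<in>C. a d \<bullet> (z + s *\<^sub>R v) < b d)"
    by (intro eventually_conj eventually_at_right_less eventually_ball_finite assms(1)) blast
  then show ?thesis
    using eventually_happens by force
qed

lemma interior_halfspace_inter:
  fixes a :: "'c \<Rightarrow> 'a::euclidean_space"
  assumes "finite C" and "\<And>c. c \<in> C \<Longrightarrow> a c \<noteq> 0"
  shows "interior {x. \<forall>c\<in>C. a c \<bullet> x \<le> b c} = {x. \<forall>c\<in>C. a c \<bullet> x < b c}"
  using assms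
proof (induction C rule: finite_induct)
  case (insert c C)
  have "{x. \<forall>d\<in>insert c C. a d \<bullet> x \<le> b d} = {x. a c \<bullet> x \<le> b c} \<inter> {x. \<forall>d\<in>C. a d \<bullet> x \<le> b d}"
    by auto
  then show ?case
    using insert by (auto simp: interior_halfspace_le)
qed simp

lemma polyhedron_halfspace_inter:
  fixes a :: "'c \<Rightarrow> 'a::euclidean_space"
  assumes "finite C"
  shows "polyhedron {x. \<forall>c\<in>C. a c \<bullet> x \<le> b c}"
proof -
  have "{x. \<forall>c\<in>C. a c \<bullet> x \<le> b c} = (\<Inter>c\<in>C. {x. a c \<bullet> x \<le> b c})"
    by auto
  then show ?thesis
    using assms by (auto intro!: polyhedron_Inter polyhedron_halfspace_le)
qed

lemma mem_open_segment_reflection: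
  fixes y z :: "'a::real_vector"
  assumes "s > 0" and "y \<noteq> z"
  shows "z \<in> open_segment (z + s *\<^sub>R (z - y)) y"
  unfolding in_segment
proof (intro conjI exI)
  have "z + s *\<^sub>R (z - y) - y = (1 + s) *\<^sub>R (z - y)"
    by (simp add: algebra_simps)
  then show "z + s *\<^sub>R (z - y) \<noteq> y"
    using assms by auto
  show "0 < s / (1 + s)" "s / (1 + s) < 1"
    using assms(1) by auto
  have "1 - s / (1 + s) = 1 / (1 + s)"
    using assms(1) by (simp add: field_simps)
  then have "(1 - s / (1 + s)) *\<^sub>R (z + s *\<^sub>R (z - y)) + (s / (1 + s)) *\<^sub>R y
      = (1 / (1 + s)) *\<^sub>R (z + s *\<^sub>R (z - y) + s *\<^sub>R y)"
    by (simp add: scaleR_add_right)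
  also have "z + s *\<^sub>R (z - y) + s *\<^sub>R y = (1 + s) *\<^sub>R z"
    by (simp add: algebra_simps)
  also have "(1 / (1 + s)) *\<^sub>R ((1 + s) *\<^sub>R z) = z"
    using assms(1) by simp
  finally show "z = (1 - s / (1 + s)) *\<^sub>R (z + s *\<^sub>R (z - y)) + (s / (1 + s)) *\<^sub>R y" ..
qed

lemma ex_point_violating_single_halfspace:
  fixes a :: "'c \<Rightarrow> 'a::real_inner"
  assumes "finite C" and "c \<in> C" and "a c \<noteq> 0" and "a c \<bullet> z = b c"
    and "\<And>d. d \<in> C \<Longrightarrow> d \<noteq> c \<Longrightarrow> a d \<bullet> z < b d"
  shows "\<exists>w. b c < a c \<bullet> w \<and> (\<forall>d\<in>C - {c}. a d \<bullet> w < b d)"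
proof -
  obtain s where "s > 0" and s: "\<forall>d\<in>C - {c}. a d \<bullet> (z + s *\<^sub>R a c) < b d"
    using ex_step_preserving_strict_ineqs[of "C - {c}" a z b "a c"] assms by auto
  have "a c \<bullet> (z + s *\<^sub>R a c) = b c + s * (a c \<bullet> a c)"
    using assms(4) by (simp add: inner_add_right)
  moreover have "s * (a c \<bullet> a c) > 0"
    using \<open>s > 0\<close> assms(3) by simp
  ultimately show ?thesis
    using s by (intro exI[of _ "z + s *\<^sub>R a c"]) auto
qed

lemma facets_halfspace_inter:
  fixes a :: "'c \<Rightarrow> 'a::euclidean_space" and b :: "'c \<Rightarrow> real" and C :: "'c set"
  defines "P \<equiv> {x. \<forall>c\<in>C. a c \<bullet> x \<le> b c}"
  assumes "finite C" and "interior P \<noteq> {}" and "\<And>c. c \<in> C \<Longrightarrow> a c \<noteq> 0"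
    and irredundant: "\<And>c. c \<in> C \<Longrightarrow> \<exists>w. b c < a c \<bullet> w \<and> (\<forall>d\<in>C - {c}. a d \<bullet> w \<le> b d)"
  shows "{F. F facet_of P} = (\<lambda>c. P \<inter> {x. a c \<bullet> x = b c}) ` C"
proof -
  define H where "H c = {x. a c \<bullet> x \<le> b c}" for c
  have P_eq: "P = \<Inter>(H ` C)"
    unfolding P_def H_def by auto
  have H_outside: "\<exists>w. w \<notin> H c \<and> (\<forall>d\<in>C - {c}. w \<in> H d)" if "c \<in> C" for c
    using irredundant[OF that] unfolding H_def by (auto simp: not_le)
  have "inj_on H C"
  proof (rule inj_onI, rule ccontr)
    fix c d assume "c \<in> C" "d \<in> C" "H c = H d" "c \<noteq> d"
    then show False
      using H_outside[of c] by auto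
  qed
  define index where "index = inv_into C H"
  have index_H: "index (H c) = c" if "c \<in> C" for c
    unfolding index_def using \<open>inj_on H C\<close> that by simp
  have "affine hull P = UNIV"
    using affine_hull_nonempty_interior[OF assms(3)] .
  have facet_iff: "F facet_of P \<longleftrightarrow> (\<exists>h. h \<in> H ` C \<and> F = P \<inter> {x. a (index h) \<bullet> x = b (index h)})" for F
  proof (rule facet_of_polyhedron_explicit)
    show "finite (H ` C)"
      using assms(2) by simp
    show "P = affine hull P \<inter> \<Inter>(H ` C)"
      using hull_subset[of P affine] P_eq by blast
    show "a (index h) \<noteq> 0 \<and> h = {x. a (index h) \<bullet> x \<le> b (index h)}" if "h \<in> H ` C" for h
      using that assms(4) index_H unfolding H_def by auto
    show "P \<subset> affine hull P \<inter> \<Inter>F'" if "F' \<subset> H ` C" for F'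
    proof -
      obtain c where "c \<in> C" "H c \<notin> F'"
        using \<open>F' \<subset> H ` C\<close> by blast
      moreover obtain w where "w \<notin> H c" and "\<forall>d\<in>C - {c}. w \<in> H d"
        using H_outside[of c] \<open>c \<in> C\<close> by blast
      ultimately have "w \<notin> P" and "w \<in> \<Inter>F'"
        using \<open>F' \<subset> H ` C\<close> unfolding P_eq by auto
      then show ?thesis
        using \<open>F' \<subset> H ` C\<close> \<open>affine hull P = UNIV\<close> unfolding P_eq by auto
    qed
  qed
  show ?thesis
    unfolding facet_iff by (auto simp: index_H)
qed

lemma card_facets_halfspace_inter:
  fixes a :: "'c \<Rightarrow> 'a::euclidean_space" and b :: "'c \<Rightarrow> real" and C :: "'c set"
  defines "P \<equiv> {x. \<forall>c\<in>C. a c \<bullet> x \<le> b c}"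
  assumes "finite C"
    and on_boundary: "\<And>c. c \<in> C \<Longrightarrow> a c \<bullet> z c = b c"
    and inside_others: "\<And>c d. c \<in> C \<Longrightarrow> d \<in> C \<Longrightarrow> d \<noteq> c \<Longrightarrow> a d \<bullet> z c < b d"
    and inside: "\<And>c. c \<in> C \<Longrightarrow> a c \<bullet> p < b c"
  shows "finite {F. F facet_of P}" and "card {F. F facet_of P} = card C"
proof -
  have nonzero: "a c \<noteq> 0" if "c \<in> C" for c
    using on_boundary[OF that] inside[OF that] by auto
  have interior_nonempty: "interior P \<noteq> {}"
    using interior_halfspace_inter[of C a b, OF \<open>finite C\<close> nonzero] inside
    unfolding P_def by blast
  have irredundant: "\<exists>w. b c < a c \<bullet> w \<and> (\<forall>d\<in>C - {c}. a d \<bullet> w \<le> b d)" if c: "c \<in> C" for c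
  proof -
    obtain w where "b c < a c \<bullet> w" "\<forall>d\<in>C - {c}. a d \<bullet> w < b d"
      using ex_point_violating_single_halfspace[of C c a "z c" b]
        \<open>finite C\<close> c nonzero[OF c] on_boundary[OF c]
        inside_others[of c] by blast
    then show ?thesis
      by (intro exI[of _ w]) (simp add: less_imp_le)
  qed
  have facets: "{F. F facet_of P} = (\<lambda>c. P \<inter> {x. a c \<bullet> x = b c}) ` C"
    unfolding P_def
    by (rule facets_halfspace_inter[OF \<open>finite C\<close> interior_nonempty[unfolded P_def] nonzero irredundant])
  have z_in_P: "z c \<in> P" if "c \<in> C" for c
    unfolding P_def
  proof (intro CollectI ballI)
    show "a d \<bullet> z c \<le> b d" if "d \<in> C" for d
      using on_boundary inside_others \<open>c \<in> C\<close> that by (cases "d = c") (auto intro: less_imp_le)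
  qed
  have "inj_on (\<lambda>c. P \<inter> {x. a c \<bullet> x = b c}) C"
  proof (rule inj_onI)
    fix c d assume "c \<in> C" "d \<in> C" "P \<inter> {x. a c \<bullet> x = b c} = P \<inter> {x. a d \<bullet> x = b d}"
    then have "a d \<bullet> z c = b d"
      using z_in_P on_boundary by blast
    then show "c = d"
      using inside_others[of c d] \<open>c \<in> C\<close> \<open>d \<in> C\<close> by force
  qed
  then show "finite {F. F facet_of P}" and "card {F. F facet_of P} = card C"
    unfolding facets using \<open>finite C\<close> by (simp_all add: card_image)
qed

lemma lattice_free_halfspace_inter:
  fixes a :: "'c \<Rightarrow> real ^ 'n" and b :: "'c \<Rightarrow> real" and C :: "'c set"
  defines "P \<equiv> {x. \<forall>c\<in>C. a c \<bullet> x \<le> b c}"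
  assumes "finite C" and nonzero: "\<And>c. c \<in> C \<Longrightarrow> a c \<noteq> 0"
    and inside: "\<And>c. c \<in> C \<Longrightarrow> a c \<bullet> p < b c"
    and covers: "\<And>x. x \<in> integer_points \<Longrightarrow> \<exists>c\<in>C. b c \<le> a c \<bullet> x"
  shows "lattice_free P"
  unfolding lattice_free_def
proof (intro conjI)
  have P_eq: "P = (\<Inter>c\<in>C. {x. a c \<bullet> x \<le> b c})"
    unfolding P_def by auto
  have interior_eq: "interior P = {x. \<forall>c\<in>C. a c \<bullet> x < b c}"
    unfolding P_def using \<open>finite C\<close> nonzero by (rule interior_halfspace_inter)
  show "convex P"
    unfolding P_eq by (intro convex_INT convex_halfspace_le)
  show "closed P"
    unfolding P_eq by (auto intro!: closed_INT closed_halfspace_le)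
  show "aff_dim P = int CARD('n)"
    using aff_dim_nonempty_interior[of P] inside unfolding interior_eq by auto
  show "interior P \<inter> integer_points = {}"
    using covers unfolding interior_eq by (force simp: not_less)
qed

lemma maximal_lattice_free_halfspace_inter:
  fixes a :: "'c \<Rightarrow> real ^ 'n" and b :: "'c \<Rightarrow> real" and C :: "'c set"
  defines "P \<equiv> {x. \<forall>c\<in>C. a c \<bullet> x \<le> b c}"
  assumes "finite C"
    and on_boundary: "\<And>c. c \<in> C \<Longrightarrow> a c \<bullet> z c = b c"
    and inside_others: "\<And>c d. c \<in> C \<Longrightarrow> d \<in> C \<Longrightarrow> d \<noteq> c \<Longrightarrow> a d \<bullet> z c < b d"
    and integral: "\<And>c. c \<in> C \<Longrightarrow> z c \<in> integer_points"
    and inside: "\<And>c. c \<in> C \<Longrightarrow> a c \<bullet> p < b c"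
    and covers: "\<And>x. x \<in> integer_points \<Longrightarrow> \<exists>c\<in>C. b c \<le> a c \<bullet> x"
  shows "maximal_lattice_free P"
  unfolding maximal_lattice_free_def
proof (intro conjI allI impI)
  have nonzero: "a c \<noteq> 0" if "c \<in> C" for c
    using on_boundary[OF that] inside[OF that] by auto
  show "lattice_free P"
    unfolding P_def using \<open>finite C\<close> nonzero inside covers by (rule lattice_free_halfspace_inter)
  have interior_eq: "interior P = {x. \<forall>c\<in>C. a c \<bullet> x < b c}"
    unfolding P_def using \<open>finite C\<close> nonzero by (rule interior_halfspace_inter)
  fix B assume "lattice_free B \<and> P \<subseteq> B"
  then have "convex B" "interior B \<inter> integer_points = {}" "P \<subseteq> B"
    unfolding lattice_free_def by auto
  show "B = P"
  proof (rule ccontr)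
    assume "B \<noteq> P"
    then obtain y where "y \<in> B" "y \<notin> P"
      using \<open>P \<subseteq> B\<close> by blast
    then obtain c where "c \<in> C" "b c < a c \<bullet> y"
      unfolding P_def by (auto simp: not_le)
    obtain s where "s > 0" and s: "\<forall>d\<in>C - {c}. a d \<bullet> (z c + s *\<^sub>R (z c - y)) < b d"
      using ex_step_preserving_strict_ineqs[of "C - {c}" a "z c" b "z c - y"]
        \<open>finite C\<close> inside_others[of c] \<open>c \<in> C\<close> by auto
    define q where "q = z c + s *\<^sub>R (z c - y)"
    have "a c \<bullet> q = b c - s * (a c \<bullet> y - b c)"
      unfolding q_def using on_boundary[OF \<open>c \<in> C\<close>]
      by (simp add: inner_add_right inner_diff_right algebra_simps)
    also have "\<dots> < b c"
      using \<open>s > 0\<close> \<open>b c < a c \<bullet> y\<close> by simp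
    finally have "q \<in> interior B"
      using s interior_mono[OF \<open>P \<subseteq> B\<close>] unfolding interior_eq q_def by auto
    then have "open_segment q y \<subseteq> interior B"
      using in_interior_closure_convex_segment[OF \<open>convex B\<close>] \<open>y \<in> B\<close> closure_subset by blast
    moreover have "z c \<in> open_segment q y"
      unfolding q_def using \<open>s > 0\<close> on_boundary[OF \<open>c \<in> C\<close>] \<open>b c < a c \<bullet> y\<close>
      by (intro mem_open_segment_reflection) auto
    ultimately show False
      using \<open>interior B \<inter> integer_points = {}\<close> integral[OF \<open>c \<in> C\<close>] by blast
  qed
qed

text \<open>A pair \<open>(T, U)\<close> stands for the inequality \<open>sum_T x_k - sum_U x_k \<le> |T|\<close>.\<close>

definition split_partitions :: "'a set \<Rightarrow> 'a \<Rightarrow> 'a set set \<Rightarrow> ('a set \<times> 'a set) set" where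
  "split_partitions S m D =
     (\<lambda>T. (T, S - T)) ` (Pow S - D) \<union> (\<lambda>T. (insert m T, S - T)) ` D \<union> (\<lambda>T. (T, insert m (S - T))) ` D"

lemma split_partitionsD:
  assumes "m \<notin> S" and "D \<subseteq> Pow S" and "(T, U) \<in> split_partitions S m D"
  shows "T \<inter> U = {}" and "T \<union> U = (if T \<inter> S \<in> D then insert m S else S)"
  using assms unfolding split_partitions_def by (auto simp: Int_absorb2 insert_absorb)

lemma split_partitions_eqI:
  assumes "m \<notin> S" and "D \<subseteq> Pow S"
    and "(T, U) \<in> split_partitions S m D" and "(T', U') \<in> split_partitions S m D"
    and "T' \<subseteq> T" and "U' \<inter> T = {}"
  shows "(T', U') = (T, U)"
proof -
  note TU = split_partitionsD[OF assms(1,2,3)] and TU' = split_partitionsD[OF assms(1,2,4)]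
  have "T \<inter> S = T' \<inter> S"
    using assms(5,6) TU' by (auto split: if_splits)
  then have "T \<union> U = T' \<union> U'"
    using TU(2) TU'(2) by simp
  then have "T = T'"
    using assms(5,6) by blast
  then show ?thesis
    using \<open>T \<union> U = T' \<union> U'\<close> TU(1) TU'(1) by blast
qed

lemma card_split_partitions:
  assumes "finite S" and "m \<notin> S" and "D \<subseteq> Pow S"
  shows "card (split_partitions S m D) = 2 ^ card S + card D"
proof -
  define A1 where "A1 = (\<lambda>T. (T, S - T)) ` (Pow S - D)"
  define A2 where "A2 = (\<lambda>T. (insert m T, S - T)) ` D"
  define A3 where "A3 = (\<lambda>T. (T, insert m (S - T))) ` D"
  have "finite D"
    using finite_subset[OF assms(3)] assms(1) by simp
  have "inj_on (\<lambda>T. (T, S - T)) (Pow S - D)"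
    by (rule inj_onI) simp
  then have "card A1 = 2 ^ card S - card D"
    unfolding A1_def using assms(1,3) \<open>finite D\<close> by (simp add: card_image card_Diff_subset card_Pow)
  have "inj_on (\<lambda>T. (insert m T, S - T)) D"
  proof (rule inj_onI)
    fix X Y assume "X \<in> D" "Y \<in> D" "(insert m X, S - X) = (insert m Y, S - Y)"
    then have "S - X = S - Y" and "X \<subseteq> S" and "Y \<subseteq> S"
      using assms(3) by auto
    then show "X = Y"
      by (metis double_diff order_refl)
  qed
  then have "card A2 = card D"
    unfolding A2_def by (rule card_image)
  have "inj_on (\<lambda>T. (T, insert m (S - T))) D"
    by (rule inj_onI) simp
  then have "card A3 = card D"
    unfolding A3_def by (rule card_image)
  have "card D \<le> 2 ^ card S"
    using card_mono[OF _ assms(3)] assms(1) by (simp add: card_Pow)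
  have "A1 \<inter> A2 = {}"
    unfolding A1_def A2_def using assms(2) by auto
  have "(A1 \<union> A2) \<inter> A3 = {}"
    unfolding A1_def A2_def A3_def using assms(2,3) by auto
  have "finite A1" "finite A2" "finite A3"
    unfolding A1_def A2_def A3_def using assms(1) \<open>finite D\<close> by simp_all
  have "split_partitions S m D = A1 \<union> A2 \<union> A3"
    unfolding split_partitions_def A1_def A2_def A3_def ..
  also have "card \<dots> = card A1 + card A2 + card A3"
    using \<open>A1 \<inter> A2 = {}\<close> \<open>(A1 \<union> A2) \<inter> A3 = {}\<close> \<open>finite A1\<close> \<open>finite A2\<close> \<open>finite A3\<close>
    by (simp add: card_Un_disjoint)
  finally show ?thesis
    using \<open>card A1 = _\<close> \<open>card A2 = _\<close> \<open>card A3 = _\<close> \<open>card D \<le> 2 ^ card S\<close> by simp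
qed

definition indicator_vec :: "'n set \<Rightarrow> real ^ 'n::finite" where
  "indicator_vec T = (\<chi> k. if k \<in> T then 1 else 0)"

lemma inner_indicator_vec: "indicator_vec T \<bullet> x = (\<Sum>k\<in>T. x $ k)"
proof -
  have "indicator_vec T \<bullet> x = (\<Sum>k\<in>UNIV. if k \<in> T then x $ k else 0)"
    unfolding indicator_vec_def inner_vec_def by (intro sum.cong) auto
  then show ?thesis
    by (simp add: sum.If_cases)
qed

lemma inner_indicator_vec_indicator_vec: "indicator_vec T \<bullet> indicator_vec U = real (card (T \<inter> U))"
  unfolding inner_indicator_vec by (simp add: indicator_vec_def sum.If_cases)

lemma indicator_vec_in_integer_points: "indicator_vec T \<in> integer_points"
  unfolding indicator_vec_def integer_points_def by auto

lemma split_partitions_on_boundary: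
  fixes S :: "'n::finite set"
  assumes "m \<notin> S" and "D \<subseteq> Pow S" and "(T, U) \<in> split_partitions S m D"
  shows "(indicator_vec T - indicator_vec U) \<bullet> indicator_vec T = real (card T)"
  using split_partitionsD(1)[OF assms]
  by (simp add: inner_diff_left inner_indicator_vec_indicator_vec Int_commute)

lemma split_partitions_inside_others:
  fixes S :: "'n::finite set"
  assumes "m \<notin> S" and "D \<subseteq> Pow S"
    and "(T, U) \<in> split_partitions S m D" and "(T', U') \<in> split_partitions S m D"
    and "(T', U') \<noteq> (T, U)"
  shows "(indicator_vec T' - indicator_vec U') \<bullet> indicator_vec T < real (card T')"
proof -
  have "\<not> (T' \<subseteq> T \<and> U' \<inter> T = {})"
    using split_partitions_eqI[OF assms(1-4)] assms(5) by blast
  then have "card (T' \<inter> T) < card T' \<or> 0 < card (U' \<inter> T)"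
  proof (cases "T' \<subseteq> T")
    case False
    then have "T' \<inter> T \<subset> T'"
      by blast
    then show ?thesis
      by (simp add: psubset_card_mono)
  qed (use \<open>\<not> (T' \<subseteq> T \<and> U' \<inter> T = {})\<close> in \<open>simp add: card_gt_0_iff\<close>)
  moreover have "card (T' \<inter> T) \<le> card T'"
    by (simp add: card_mono)
  ultimately have "card (T' \<inter> T) < card T' + card (U' \<inter> T)"
    by linarith
  then show ?thesis
    by (simp add: inner_diff_left inner_indicator_vec_indicator_vec)
qed

lemma split_partitions_inside_center:
  fixes S :: "'n::finite set"
  assumes "m \<notin> S" and "D \<subseteq> Pow S" and "D \<noteq> {}" and "(T, U) \<in> split_partitions S m D"
  shows "(indicator_vec T - indicator_vec U) \<bullet> (\<chi> k. 1 / 2) < real (card T)"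
proof -
  have "T \<union> U \<noteq> {}"
    using split_partitionsD(2)[OF assms(1,2,4)] assms(2,3) by (auto split: if_splits)
  then have "0 < card T + card U"
    by (simp add: card_gt_0_iff)
  then have "0 < real (card T) + real (card U)"
    by (metis of_nat_add of_nat_0_less_iff)
  then show ?thesis
    by (simp add: inner_diff_left inner_indicator_vec)
qed

lemma Ints_nonpos_if_less_one: "r \<in> \<int> \<Longrightarrow> r < 1 \<Longrightarrow> r \<le> (0::real)"
  by (elim Ints_cases) simp

lemma split_partitions_cover:
  fixes S :: "'n::finite set"
  assumes "m \<notin> S" and "D \<subseteq> Pow S" and "x \<in> integer_points"
  shows "\<exists>(T, U) \<in> split_partitions S m D. real (card T) \<le> (indicator_vec T - indicator_vec U) \<bullet> x"
proof -
  have integral: "x $ k \<in> \<int>" for k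
    using assms(3) unfolding integer_points_def by auto
  define T0 where "T0 = {k \<in> S. 1 \<le> x $ k}"
  have large: "real (card T0) \<le> (\<Sum>k\<in>T0. x $ k)"
    using sum_mono[of T0 "\<lambda>_. 1" "\<lambda>k. x $ k"] unfolding T0_def by auto
  have small: "(\<Sum>k\<in>S - T0. x $ k) \<le> 0"
    by (intro sum_nonpos) (auto simp: T0_def not_le intro: Ints_nonpos_if_less_one[OF integral])
  have "m \<notin> T0"
    using assms(1) unfolding T0_def by blast
  have inner_eq: "(indicator_vec T - indicator_vec U) \<bullet> x = (\<Sum>k\<in>T. x $ k) - (\<Sum>k\<in>U. x $ k)" for T U
    by (simp add: inner_diff_left inner_indicator_vec)
  consider "T0 \<notin> D" | "T0 \<in> D" "1 \<le> x $ m" | "T0 \<in> D" "x $ m < 1"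
    by fastforce
  then show ?thesis
  proof cases
    case 1
    then have "(T0, S - T0) \<in> split_partitions S m D"
      unfolding split_partitions_def T0_def by auto
    moreover have "real (card T0) \<le> (indicator_vec T0 - indicator_vec (S - T0)) \<bullet> x"
      using large small inner_eq by simp
    ultimately show ?thesis
      by blast
  next
    case 2
    then have "(insert m T0, S - T0) \<in> split_partitions S m D"
      unfolding split_partitions_def by auto
    moreover have "real (card (insert m T0)) \<le> (indicator_vec (insert m T0) - indicator_vec (S - T0)) \<bullet> x"
      using large small inner_eq \<open>m \<notin> T0\<close> 2(2) by simp
    ultimately show ?thesis
      by blast
  next
    case 3
    have "x $ m \<le> 0"
      using Ints_nonpos_if_less_one[OF integral 3(2)] .
    have "(T0, insert m (S - T0)) \<in> split_partitions S m D"
      unfolding split_partitions_def using 3(1) by auto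
    moreover have "real (card T0) \<le> (indicator_vec T0 - indicator_vec (insert m (S - T0))) \<bullet> x"
      using large small inner_eq assms(1) \<open>x $ m \<le> 0\<close> by simp
    ultimately show ?thesis
      by blast
  qed
qed

lemma ex_maximal_lattice_free_polyhedron_split_partitions:
  fixes S :: "'n::finite set"
  assumes "m \<notin> S" and "D \<subseteq> Pow S" and "D \<noteq> {}"
  shows "\<exists>P :: (real ^ 'n) set. polyhedron P \<and> maximal_lattice_free P \<and>
           finite {F. F facet_of P} \<and> card {F. F facet_of P} = 2 ^ card S + card D"
proof -
  define C where "C = split_partitions S m D"
  define a :: "'n set \<times> 'n set \<Rightarrow> real ^ 'n" where "a = (\<lambda>(T, U). indicator_vec T - indicator_vec U)"
  define b :: "'n set \<times> 'n set \<Rightarrow> real" where "b = (\<lambda>(T, U). real (card T))"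
  define z :: "'n set \<times> 'n set \<Rightarrow> real ^ 'n" where "z = (\<lambda>(T, U). indicator_vec T)"
  define P where "P = {x. \<forall>c\<in>C. a c \<bullet> x \<le> b c}"
  have "finite C"
    by simp
  have on_boundary: "a c \<bullet> z c = b c" if "c \<in> C" for c
    using split_partitions_on_boundary[OF assms(1,2)] that unfolding C_def a_def b_def z_def
    by (cases c) auto
  have inside_others: "a d \<bullet> z c < b d" if "c \<in> C" "d \<in> C" "d \<noteq> c" for c d
    using split_partitions_inside_others[OF assms(1,2)] that unfolding C_def a_def b_def z_def
    by (cases c, cases d) auto
  have integral: "z c \<in> integer_points" for c
    unfolding z_def by (cases c) (simp add: indicator_vec_in_integer_points)
  have inside: "a c \<bullet> (\<chi> k. 1 / 2) < b c" if "c \<in> C" for c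
    using split_partitions_inside_center[OF assms] that unfolding C_def a_def b_def
    by (cases c) auto
  have covers: "\<exists>c\<in>C. b c \<le> a c \<bullet> x" if "x \<in> integer_points" for x
    using split_partitions_cover[OF assms(1,2) that] unfolding C_def a_def b_def by force
  have "polyhedron P"
    unfolding P_def using \<open>finite C\<close> by (rule polyhedron_halfspace_inter)
  moreover have "maximal_lattice_free P"
    unfolding P_def using \<open>finite C\<close> on_boundary inside_others integral inside covers
    by (rule maximal_lattice_free_halfspace_inter)
  moreover have "finite {F. F facet_of P}" and "card {F. F facet_of P} = card C"
    using card_facets_halfspace_inter[of C a z b, OF \<open>finite C\<close> on_boundary inside_others inside]
    unfolding P_def by blast+
  moreover have "card C = 2 ^ card S + card D"
    unfolding C_def using assms(1,2) by (simp add: card_split_partitions)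
  ultimately show ?thesis
    by auto
qed

lemma ex_power_of_two_bracket: "2 \<le> (i::nat) \<Longrightarrow> \<exists>s. 2 ^ s < i \<and> i \<le> 2 ^ (s + 1)"
proof (induction i rule: dec_induct)
  case base
  then show ?case
    by (intro exI[of _ 0]) simp
next
  case (step i)
  then obtain s where s: "2 ^ s < i" "i \<le> 2 ^ (s + 1)"
    by blast
  show ?case
  proof (cases "i + 1 \<le> 2 ^ (s + 1)")
    case True
    then show ?thesis
      using s by (intro exI[of _ s]) simp
  next
    case False
    then have "i = 2 ^ (s + 1)"
      using s by simp
    then show ?thesis
      by (intro exI[of _ "s + 1"]) simp
  qed
qed

theorem lemma3p3:
  fixes i :: nat
  assumes "2 \<le> i" and "i \<le> 2 ^ CARD('n::finite)"
  shows "\<exists>P :: (real ^ 'n) set. polyhedron P \<and> maximal_lattice_free P \<and>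
           finite {F. F facet_of P} \<and> card {F. F facet_of P} = i"
proof -
  obtain s where s: "2 ^ s < i" "i \<le> 2 ^ (s + 1)"
    using ex_power_of_two_bracket[OF assms(1)] by blast
  then have "(2::nat) ^ s < 2 ^ CARD('n)"
    using assms(2) by linarith
  then have "s < CARD('n)"
    by simp
  fix m :: 'n
  have "s \<le> card (UNIV - {m})"
    using \<open>s < CARD('n)\<close> by simp
  then obtain S where "S \<subseteq> UNIV - {m}" and "card S = s"
    by (rule obtain_subset_with_card_n)
  have "i - 2 ^ s \<le> card (Pow S)"
    using s(2) \<open>card S = s\<close> by (simp add: card_Pow)
  then obtain D where "D \<subseteq> Pow S" and "card D = i - 2 ^ s"
    by (rule obtain_subset_with_card_n)
  moreover have "D \<noteq> {}"
    using \<open>card D = i - 2 ^ s\<close> s(1) by auto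
  moreover have "m \<notin> S"
    using \<open>S \<subseteq> UNIV - {m}\<close> by blast
  ultimately show ?thesis
    using ex_maximal_lattice_free_polyhedron_split_partitions[of m S D] s(1) \<open>card S = s\<close> by auto
qed

end
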